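(* Let $\Delta:M_n\to M_n$ be a weak-2-local derivation, and let $p_1,\ldots,p_n$ be mutually orthogonal minimal projections in $M_n$ with $\Delta(p_k)=0$ for $1\le k\le n$. If $\Delta(p_1+e_{1j_0}-e_{i_01})=0$ for some $2\le i_0,j_0\le n$, then $\Delta(e_{i_0j_0})=0$.
   Context: $M_n=M_n(\mathbb{C})$. For $i,j$, $e_{ij}$ is the unique minimal partial isometry in $M_n$ with $e_{ij}^*e_{ij}=p_j$ and $e_{ij}e_{ij}^*=p_i$. A derivation on $M_n$ is a linear map $D$ with $D(ab)=D(a)b+aD(b)$. A (not necessarily linear) map $\Delta:M_n\to M_n$ is a weak-2-local derivation if for every $a,b\in M_n$ and every $\phi\in M_n^*$ there exists a derivation $D_{a,b,\phi}$ such that $\phi\Delta(a)=\phi D_{a,b,\phi}(a)$ and $\phi\Delta(b)=\phi D_{a,b,\phi}(b)$. *)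

theory Defs
  imports "Jordan_Normal_Form.Matrix"
begin

text \<open>M_n = carrier_mat n n of complex matrices.\<close>

definition adj :: "complex mat \<Rightarrow> complex mat" where
  "adj A = mat (dim_col A) (dim_row A) (\<lambda>(i,j). cnj (A $$ (j,i)))"

definition is_projection :: "nat \<Rightarrow> complex mat \<Rightarrow> bool" where
  "is_projection n p \<longleftrightarrow> p \<in> carrier_mat n n \<and> adj p = p \<and> p * p = p"

definition minimal_projection :: "nat \<Rightarrow> complex mat \<Rightarrow> bool" where
  "minimal_projection n p \<longleftrightarrow> is_projection n p \<and> p \<noteq> 0\<^sub>m n n \<and>
     (\<forall>q. is_projection n q \<and> q * p = q \<longrightarrow> q = 0\<^sub>m n n \<or> q = p)"

definition partial_isometry :: "nat \<Rightarrow> complex mat \<Rightarrow> bool" where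
  "partial_isometry n e \<longleftrightarrow> e \<in> carrier_mat n n \<and> e * adj e * e = e"

definition functional :: "nat \<Rightarrow> (complex mat \<Rightarrow> complex) \<Rightarrow> bool" where
  "functional n \<phi> \<longleftrightarrow>
     (\<forall>a\<in>carrier_mat n n. \<forall>b\<in>carrier_mat n n. \<phi> (a + b) = \<phi> a + \<phi> b) \<and>
     (\<forall>a\<in>carrier_mat n n. \<forall>c. \<phi> (c \<cdot>\<^sub>m a) = c * \<phi> a)"

definition derivation :: "nat \<Rightarrow> (complex mat \<Rightarrow> complex mat) \<Rightarrow> bool" where
  "derivation n D \<longleftrightarrow>
     (\<forall>a\<in>carrier_mat n n. D a \<in> carrier_mat n n) \<and>
     (\<forall>a\<in>carrier_mat n n. \<forall>b\<in>carrier_mat n n. D (a + b) = D a + D b) \<and>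
     (\<forall>a\<in>carrier_mat n n. \<forall>c. D (c \<cdot>\<^sub>m a) = c \<cdot>\<^sub>m D a) \<and>
     (\<forall>a\<in>carrier_mat n n. \<forall>b\<in>carrier_mat n n. D (a * b) = D a * b + a * D b)"

definition weak_2_local_derivation :: "nat \<Rightarrow> (complex mat \<Rightarrow> complex mat) \<Rightarrow> bool" where
  "weak_2_local_derivation n \<Delta> \<longleftrightarrow>
     (\<forall>a\<in>carrier_mat n n. \<Delta> a \<in> carrier_mat n n) \<and>
     (\<forall>a\<in>carrier_mat n n. \<forall>b\<in>carrier_mat n n. \<forall>\<phi>. functional n \<phi> \<longrightarrow>
        (\<exists>D. derivation n D \<and> \<phi> (\<Delta> a) = \<phi> (D a) \<and> \<phi> (\<Delta> b) = \<phi> (D b)))"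

end

theory Submission imports Defs begin

text \<open>For a linear functional \<open>\<phi>\<close>, the derivation \<open>D\<close> matching \<open>\<Delta>\<close> at \<open>x\<close> and at some \<open>z\<close>
  with \<open>\<Delta> z = 0\<close> also satisfies \<open>\<phi> (D z) = 0\<close>.  Since every derivation satisfies
  \<open>P D(w) Q = 0\<close> whenever \<open>P w = 0 = w Q\<close>, taking \<open>\<phi>\<close> among the entries of \<open>P _ Q\<close> gives
  \<open>P \<Delta>(x) Q = 0\<close> whenever \<open>x\<close> differs from such a \<open>w\<close> by a multiple of \<open>z\<close>.  For
  \<open>x = e\<^sub>i\<^sub>j\<close> with \<open>i \<noteq> j\<close>, the choices \<open>w = x, x - p\<^sub>i, x - p\<^sub>j\<close> put \<open>\<Delta> x\<close> into the corner
  \<open>p\<^sub>i M\<^sub>n p\<^sub>j\<close>.  The hypothesis on \<open>y = p\<^sub>1 + e\<^sub>1\<^sub>j - e\<^sub>i\<^sub>1\<close> then kills this corner: with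
  \<open>P = p\<^sub>i + e\<^sub>i\<^sub>1\<close> and \<open>Q = p\<^sub>j - e\<^sub>1\<^sub>j\<close> one has \<open>P x Q = x\<close> and \<open>P y = y Q = e\<^sub>i\<^sub>1 e\<^sub>1\<^sub>j\<close>,
  a nonzero multiple of \<open>x\<close>, so \<open>x - y/\<mu>\<close> is annihilated by \<open>P\<close> and \<open>Q\<close>.  For \<open>i = j\<close>,
  minimality of \<open>p\<^sub>i\<close> makes \<open>e\<^sub>i\<^sub>i\<close> a multiple of \<open>p\<^sub>i\<close>.\<close>

declare minus_carrier_mat[simp]

lemma index_mult_mat_sum:
  assumes "A \<in> carrier_mat n n" "B \<in> carrier_mat n n" "i < n" "j < n"
  shows "(A * B) $$ (i,j) = (\<Sum>k<n. A $$ (i,k) * B $$ (k,j))"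
  using assms by (simp add: scalar_prod_def atLeast0LessThan)

lemma adj_carrier_mat[simp]: "A \<in> carrier_mat n m \<Longrightarrow> adj A \<in> carrier_mat m n"
  unfolding adj_def by auto

lemma index_adj: "A \<in> carrier_mat n m \<Longrightarrow> i < m \<Longrightarrow> j < n \<Longrightarrow> adj A $$ (i,j) = cnj (A $$ (j,i))"
  unfolding adj_def by auto

lemma minus_zero_mat: "A \<in> carrier_mat nr nc \<Longrightarrow> A - 0\<^sub>m nr nc = (A :: 'a :: group_add mat)"
  by (intro eq_matI) auto

subsection \<open>Derivations and weak-2-local derivations\<close>

lemma derivation_zero:
  assumes "derivation n D"
  shows "D (0\<^sub>m n n) = 0\<^sub>m n n"
proof -
  have z: "(0\<^sub>m n n :: complex mat) \<in> carrier_mat n n" by simp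
  hence Dz: "D (0\<^sub>m n n) \<in> carrier_mat n n" using assms unfolding derivation_def by blast
  have "D (0\<^sub>m n n) = D ((0::complex) \<cdot>\<^sub>m 0\<^sub>m n n)" by simp
  also have "\<dots> = 0 \<cdot>\<^sub>m D (0\<^sub>m n n)" using assms z unfolding derivation_def by blast
  also have "\<dots> = 0\<^sub>m n n" using Dz by (intro eq_matI) auto
  finally show ?thesis .
qed

lemma derivation_sandwich_eq_0:
  assumes der: "derivation n D" and P: "P \<in> carrier_mat n n" and Q: "Q \<in> carrier_mat n n"
    and w: "w \<in> carrier_mat n n" and Pw: "P * w = 0\<^sub>m n n" and wQ: "w * Q = 0\<^sub>m n n"
  shows "P * D w * Q = 0\<^sub>m n n"
proof -
  have Dw: "D w \<in> carrier_mat n n" and DQ: "D Q \<in> carrier_mat n n"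
    using der w Q unfolding derivation_def by auto
  have "D w * Q + w * D Q = 0\<^sub>m n n"
    using der w Q wQ derivation_zero[OF der] unfolding derivation_def by metis
  hence "P * (D w * Q) + P * (w * D Q) = 0\<^sub>m n n"
    using mult_add_distrib_mat[OF P, of "D w * Q" n "w * D Q"] P Dw DQ w Q by simp
  moreover have "P * (w * D Q) = 0\<^sub>m n n"
    using assoc_mult_mat[OF P w DQ, symmetric] Pw DQ by simp
  ultimately show ?thesis
    using P Dw Q assoc_mult_mat[OF P Dw Q] by simp
qed

lemma weak_2_local_derivation_sandwich_eq_0:
  assumes w2l: "weak_2_local_derivation n \<Delta>"
    and w: "w \<in> carrier_mat n n" and z: "z \<in> carrier_mat n n"
    and P: "P \<in> carrier_mat n n" and Q: "Q \<in> carrier_mat n n"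
    and Dz: "\<Delta> z = 0\<^sub>m n n" and x: "x = w + c \<cdot>\<^sub>m z"
    and Pw: "P * w = 0\<^sub>m n n" and wQ: "w * Q = 0\<^sub>m n n"
  shows "P * \<Delta> x * Q = 0\<^sub>m n n"
proof (rule eq_matI)
  have xC: "x \<in> carrier_mat n n" unfolding x using w z by simp
  fix i j assume ij: "i < dim_row (0\<^sub>m n n :: complex mat)" "j < dim_col (0\<^sub>m n n :: complex mat)"
  define \<phi> where "\<phi> = (\<lambda>Z. (P * Z * Q) $$ (i,j))"
  have \<phi>_add: "\<phi> (a + b) = \<phi> a + \<phi> b" if "a \<in> carrier_mat n n" "b \<in> carrier_mat n n" for a b
  proof -
    have "P * (a + b) * Q = P * a * Q + P * b * Q"
      using that P Q mult_add_distrib_mat[OF P that] add_mult_distrib_mat[of "P*a" n n "P*b" Q n] by simp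
    thus ?thesis unfolding \<phi>_def using ij P Q that by simp
  qed
  have \<phi>_smult: "\<phi> (c \<cdot>\<^sub>m a) = c * \<phi> a" if "a \<in> carrier_mat n n" for a c
  proof -
    have "P * (c \<cdot>\<^sub>m a) * Q = c \<cdot>\<^sub>m (P * a * Q)"
      using that P Q mult_smult_distrib[OF P that] mult_smult_assoc_mat[of "P*a" n n Q n] by simp
    thus ?thesis unfolding \<phi>_def using ij P Q that by simp
  qed
  have "functional n \<phi>" unfolding functional_def using \<phi>_add \<phi>_smult by blast
  then obtain D where der: "derivation n D" and Dx: "\<phi> (\<Delta> x) = \<phi> (D x)"
    and Dz': "\<phi> (\<Delta> z) = \<phi> (D z)"
    using w2l xC z unfolding weak_2_local_derivation_def by blast
  have Dw: "D w \<in> carrier_mat n n" and DDz: "D z \<in> carrier_mat n n"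
    using der w z unfolding derivation_def by auto
  have "D x = D w + c \<cdot>\<^sub>m D z"
    using der w z unfolding x derivation_def by simp
  hence "\<phi> (D x) = \<phi> (D w) + c * \<phi> (D z)"
    using \<phi>_add[OF Dw, of "c \<cdot>\<^sub>m D z"] \<phi>_smult[OF DDz] DDz by simp
  moreover have "\<phi> (D w) = 0"
    unfolding \<phi>_def using derivation_sandwich_eq_0[OF der P Q w Pw wQ] ij by simp
  moreover have "\<phi> (D z) = 0" using Dz' Dz ij P Q unfolding \<phi>_def by simp
  ultimately have "\<phi> (\<Delta> x) = 0" using Dx by simp
  thus "(P * \<Delta> x * Q) $$ (i, j) = 0\<^sub>m n n $$ (i, j)"
    unfolding \<phi>_def using ij by simp
qed (use P Q in auto)

lemma weak_2_local_derivation_smult_eq_0: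
  assumes w2l: "weak_2_local_derivation n \<Delta>" and z: "z \<in> carrier_mat n n"
    and Dz: "\<Delta> z = 0\<^sub>m n n"
  shows "\<Delta> (c \<cdot>\<^sub>m z) = 0\<^sub>m n n"
proof -
  have "1\<^sub>m n * \<Delta> (c \<cdot>\<^sub>m z) * 1\<^sub>m n = 0\<^sub>m n n"
    by (rule weak_2_local_derivation_sandwich_eq_0[OF w2l _ z _ _ Dz, of "0\<^sub>m n n"]) (use z in auto)
  moreover have "\<Delta> (c \<cdot>\<^sub>m z) \<in> carrier_mat n n"
    using w2l z unfolding weak_2_local_derivation_def by simp
  ultimately show ?thesis using z by simp
qed

subsection \<open>Minimal projections\<close>

lemma projection_hermitian:
  assumes "is_projection n p" "i < n" "k < n"
  shows "p $$ (i,k) = cnj (p $$ (k,i))"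
  using assms index_adj[of p n n i k] unfolding is_projection_def by auto

lemma projection_diag_nonzero:
  assumes pr: "is_projection n p" and nz: "p \<noteq> 0\<^sub>m n n"
  shows "\<exists>j<n. p $$ (j,j) \<noteq> 0"
proof (rule ccontr)
  assume "\<not> ?thesis"
  hence diag: "\<And>j. j < n \<Longrightarrow> p $$ (j,j) = 0" by auto
  have pC: "p \<in> carrier_mat n n" and pp: "p * p = p"
    using pr unfolding is_projection_def by auto
  have "p $$ (k,j) = 0" if kj: "k < n" "j < n" for k j
  proof -
    have "p $$ (j,j) = (\<Sum>l<n. p $$ (j,l) * p $$ (l,j))"
      using index_mult_mat_sum[OF pC pC kj(2) kj(2)] pp by simp
    also have "\<dots> = (\<Sum>l<n. of_real ((cmod (p $$ (l,j)))^2))"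
      by (rule sum.cong) (auto simp: projection_hermitian[OF pr kj(2)] mult.commute
          complex_mult_cnj cmod_def power2_eq_square)
    finally have "(\<Sum>l<n. (cmod (p $$ (l,j)))^2) = 0"
      using diag[OF kj(2)] by (metis of_real_eq_0_iff of_real_sum)
    hence "(cmod (p $$ (k,j)))^2 = 0"
      using kj by (subst (asm) sum_nonneg_eq_0_iff) auto
    thus ?thesis by simp
  qed
  hence "p = 0\<^sub>m n n" using pC by (intro eq_matI) auto
  with nz show False by simp
qed

text \<open>For a projection \<open>p\<close> with \<open>p\<^sub>j\<^sub>j \<noteq> 0\<close>, the rank-one matrix
  \<open>q\<^sub>r\<^sub>s = p\<^sub>r\<^sub>j p\<^sub>j\<^sub>s / p\<^sub>j\<^sub>j\<close> is the projection onto the column \<open>p e\<^sub>j\<close>.\<close>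

lemma projection_onto_column:
  assumes pr: "is_projection n p" and j: "j < n" and d: "p $$ (j,j) \<noteq> 0"
  defines "q \<equiv> mat n n (\<lambda>(r,s). p $$ (r,j) * p $$ (j,s) / p $$ (j,j))"
  shows "is_projection n q" "q * p = q" "q \<noteq> 0\<^sub>m n n"
proof -
  have pC: "p \<in> carrier_mat n n" and pp: "p * p = p"
    using pr unfolding is_projection_def by auto
  have qC: "q \<in> carrier_mat n n" unfolding q_def by simp
  have qi: "q $$ (r,s) = p $$ (r,j) * p $$ (j,s) / p $$ (j,j)" if "r < n" "s < n" for r s
    unfolding q_def using that by simp
  have pp_entry: "(\<Sum>k<n. p $$ (r,k) * p $$ (k,s)) = p $$ (r,s)" if "r < n" "s < n" for r s
    using index_mult_mat_sum[OF pC pC that] pp by simp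
  have "cnj (p $$ (j,j)) = p $$ (j,j)"
    using projection_hermitian[OF pr j j] by (metis complex_cnj_cnj)
  hence "adj q = q"
    using qC projection_hermitian[OF pr _ j] projection_hermitian[OF pr j]
    by (intro eq_matI) (auto simp: index_adj qi mult.commute adj_def)
  moreover have "q * q = q"
  proof (rule eq_matI)
    fix r s assume "r < dim_row q" "s < dim_col q"
    hence rs: "r < n" "s < n" using qC by auto
    have "(q * q) $$ (r,s) = (\<Sum>k<n. (p $$ (r,j) * p $$ (j,s) / (p $$ (j,j))\<^sup>2) * (p $$ (j,k) * p $$ (k,j)))"
      using index_mult_mat_sum[OF qC qC rs] by (auto intro!: sum.cong simp: qi rs power2_eq_square)
    also have "\<dots> = (p $$ (r,j) * p $$ (j,s) / (p $$ (j,j))\<^sup>2) * (\<Sum>k<n. p $$ (j,k) * p $$ (k,j))"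
      by (simp add: sum_distrib_left)
    also have "\<dots> = q $$ (r,s)"
      using pp_entry[OF j j] qi[OF rs] d by (simp add: power2_eq_square)
    finally show "(q * q) $$ (r,s) = q $$ (r,s)" .
  qed (use qC in auto)
  ultimately show "is_projection n q" unfolding is_projection_def using qC by simp
  show "q * p = q"
  proof (rule eq_matI)
    fix r s assume "r < dim_row q" "s < dim_col q"
    hence rs: "r < n" "s < n" using qC by auto
    have "(q * p) $$ (r,s) = (\<Sum>k<n. (p $$ (r,j) / p $$ (j,j)) * (p $$ (j,k) * p $$ (k,s)))"
      using index_mult_mat_sum[OF qC pC rs] by (auto intro!: sum.cong simp: qi rs)
    also have "\<dots> = (p $$ (r,j) / p $$ (j,j)) * (\<Sum>k<n. p $$ (j,k) * p $$ (k,s))"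
      by (simp add: sum_distrib_left)
    also have "\<dots> = q $$ (r,s)"
      using pp_entry[OF j rs(2)] qi[OF rs] by simp
    finally show "(q * p) $$ (r,s) = q $$ (r,s)" .
  qed (use qC pC in auto)
  show "q \<noteq> 0\<^sub>m n n"
    using qi[OF j j] d j by (metis index_zero_mat(1) divide_eq_0_iff mult_eq_0_iff)
qed

lemma minimal_projection_rank_one:
  assumes mp: "minimal_projection n p"
  obtains j where "j < n" "p $$ (j,j) \<noteq> 0"
    "\<And>r s. r < n \<Longrightarrow> s < n \<Longrightarrow> p $$ (r,s) = p $$ (r,j) * p $$ (j,s) / p $$ (j,j)"
proof -
  have pr: "is_projection n p" and "p \<noteq> 0\<^sub>m n n"
    using mp unfolding minimal_projection_def by auto
  then obtain j where j: "j < n" and d: "p $$ (j,j) \<noteq> 0"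
    using projection_diag_nonzero by blast
  define q where "q = mat n n (\<lambda>(r,s). p $$ (r,j) * p $$ (j,s) / p $$ (j,j))"
  have "q = p"
    using mp projection_onto_column[OF pr j d] unfolding minimal_projection_def q_def by blast
  hence "p $$ (r,s) = p $$ (r,j) * p $$ (j,s) / p $$ (j,j)" if "r < n" "s < n" for r s
    using that unfolding q_def by (metis (no_types, lifting) case_prod_conv index_mat(1))
  with j d that show ?thesis by blast
qed

lemma minimal_projection_compression:
  assumes mp: "minimal_projection n p" and Z: "Z \<in> carrier_mat n n"
  shows "\<exists>\<mu>. p * Z * p = \<mu> \<cdot>\<^sub>m p"
proof -
  have pC: "p \<in> carrier_mat n n"
    using mp unfolding minimal_projection_def is_projection_def by auto
  obtain j where j: "j < n" and d: "p $$ (j,j) \<noteq> 0"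
    and pf: "\<And>r s. r < n \<Longrightarrow> s < n \<Longrightarrow> p $$ (r,s) = p $$ (r,j) * p $$ (j,s) / p $$ (j,j)"
    using minimal_projection_rank_one[OF mp] by blast
  define d where "d = p $$ (j,j)"
  have pZC: "p * Z \<in> carrier_mat n n" using pC Z by simp
  have pZ: "(p * Z) $$ (r,l) = p $$ (r,j) / d * (p * Z) $$ (j,l)" if "r < n" "l < n" for r l
  proof -
    have "(p * Z) $$ (r,l) = (\<Sum>k<n. p $$ (r,j) / d * (p $$ (j,k) * Z $$ (k,l)))"
      using index_mult_mat_sum[OF pC Z that] by (auto intro!: sum.cong simp: pf that d_def)
    also have "\<dots> = p $$ (r,j) / d * (p * Z) $$ (j,l)"
      using index_mult_mat_sum[OF pC Z j that(2)] by (simp add: sum_distrib_left)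
    finally show ?thesis .
  qed
  define \<mu> where "\<mu> = (p * Z * p) $$ (j,j) / d"
  have "p * Z * p = \<mu> \<cdot>\<^sub>m p"
  proof (rule eq_matI)
    fix r s assume "r < dim_row (\<mu> \<cdot>\<^sub>m p)" "s < dim_col (\<mu> \<cdot>\<^sub>m p)"
    hence rs: "r < n" "s < n" using pC by auto
    have "(p * Z * p) $$ (r,s) = (\<Sum>l<n. (p $$ (r,j) / d * p $$ (j,s) / d) * ((p * Z) $$ (j,l) * p $$ (l,j)))"
      using index_mult_mat_sum[OF pZC pC rs] by (auto intro!: sum.cong simp: pZ pf rs d_def)
    also have "\<dots> = (p $$ (r,j) / d * p $$ (j,s) / d) * (p * Z * p) $$ (j,j)"
      using index_mult_mat_sum[OF pZC pC j j] by (simp add: sum_distrib_left)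
    also have "\<dots> = (\<mu> \<cdot>\<^sub>m p) $$ (r,s)"
      using pf[OF rs] rs pC unfolding \<mu>_def d_def by simp
    finally show "(p * Z * p) $$ (r,s) = (\<mu> \<cdot>\<^sub>m p) $$ (r,s)" .
  qed (use pC Z in auto)
  thus ?thesis by blast
qed

lemmas mat_distribs =
  add_mult_distrib_mat[where nr=n and n=n and nc=n] mult_add_distrib_mat[where nr=n and n=n and nc=n]
  minus_mult_distrib_mat[where nr=n and n=n and nc=n] mult_minus_distrib_mat[where nr=n and n=n and nc=n]
  for n

lemma mult_eq_0_through_orthogonal:
  assumes "A \<in> carrier_mat n n" "B \<in> carrier_mat n n" "P \<in> carrier_mat n n" "Q \<in> carrier_mat n n"
    and "A * P = A" "Q * B = B" "P * Q = 0\<^sub>m n n"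
  shows "A * B = 0\<^sub>m n n"
proof -
  have "A * B = (A * P) * (Q * B)" using assms by simp
  also have "\<dots> = A * ((P * Q) * B)"
    using assms(1-4) by (simp add: assoc_mult_mat[where n\<^sub>1=n and n\<^sub>2=n and n\<^sub>3=n and n\<^sub>4=n])
  also have "\<dots> = 0\<^sub>m n n" unfolding assms(7) using assms(1,2) by simp
  finally show ?thesis .
qed

lemma eq_corner_by_blocks:
  fixes M pa pb :: "'a :: ring_1 mat"
  assumes MC: "M \<in> carrier_mat n n" and paC: "pa \<in> carrier_mat n n" and pbC: "pb \<in> carrier_mat n n"
    and A: "(1\<^sub>m n - pa) * M * (1\<^sub>m n - pb) = 0\<^sub>m n n"
    and B: "(1\<^sub>m n - pa) * M * pb = 0\<^sub>m n n"
    and C: "pa * M * (1\<^sub>m n - pb) = 0\<^sub>m n n"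
  shows "M = pa * M * pb"
proof -
  note ms = mat_distribs[of _ n]
  have col_split: "Y = Y * (1\<^sub>m n - pb) + Y * pb" if "Y \<in> carrier_mat n n" for Y
    using that pbC by (simp add: ms, intro eq_matI, auto)
  have "M = (1\<^sub>m n - pa) * M + pa * M"
    using paC MC by (simp add: ms, intro eq_matI, auto)
  also have "(1\<^sub>m n - pa) * M = 0\<^sub>m n n"
    using col_split[of "(1\<^sub>m n - pa) * M"] A B paC MC
    by (simp add: mult_carrier_mat[where nr=n and n=n and nc=n])
  also have "pa * M = pa * M * (1\<^sub>m n - pb) + pa * M * pb"
    using col_split paC MC by simp
  finally show ?thesis
    using C paC MC pbC by (simp add: mult_carrier_mat[where nr=n and n=n and nc=n])
qed

lemma weak_2_local_derivation_corner:
  assumes w2l: "weak_2_local_derivation n \<Delta>"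
    and xC: "x \<in> carrier_mat n n" and paC: "pa \<in> carrier_mat n n" and pbC: "pb \<in> carrier_mat n n"
    and papa: "pa * pa = pa" and pbpb: "pb * pb = pb"
    and papb: "pa * pb = 0\<^sub>m n n" and pbpa: "pb * pa = 0\<^sub>m n n"
    and Dpa: "\<Delta> pa = 0\<^sub>m n n" and Dpb: "\<Delta> pb = 0\<^sub>m n n"
    and pax: "pa * x = x" and xpb: "x * pb = x"
  shows "\<Delta> x = pa * \<Delta> x * pb"
proof -
  note sandwich = weak_2_local_derivation_sandwich_eq_0[OF w2l]
  note ms = mat_distribs[of _ n]
  define I where "I = (1\<^sub>m n :: complex mat)"
  define M where "M = \<Delta> x"
  have IC: "I \<in> carrier_mat n n" unfolding I_def by simp
  have MC: "M \<in> carrier_mat n n" using w2l xC unfolding M_def weak_2_local_derivation_def by auto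
  have xx: "x * x = 0\<^sub>m n n" by (rule mult_eq_0_through_orthogonal[OF xC xC pbC paC xpb pax pbpa])
  have x0: "x = x + 0 \<cdot>\<^sub>m pa" using xC paC by (intro eq_matI) auto
  have left: "(I - pa) * x = 0\<^sub>m n n" and right: "x * (I - pb) = 0\<^sub>m n n"
    using xC paC pbC IC pax xpb by (simp_all add: ms I_def)
  have A: "(I - pa) * M * (I - pb) = 0\<^sub>m n n"
    unfolding M_def by (rule sandwich[OF xC paC _ _ Dpa x0 left right]) (use IC paC pbC in auto)
  have "(I - pa) * M * x = 0\<^sub>m n n"
    unfolding M_def by (rule sandwich[OF xC paC _ xC Dpa x0 left xx]) (use IC paC in auto)
  moreover have "(I - pa) * M * (x + pb) = 0\<^sub>m n n" unfolding M_def
  proof (rule sandwich[where w = "x - pa" and c = 1, OF _ paC _ _ Dpa])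
    show "x = x - pa + 1 \<cdot>\<^sub>m pa" using xC paC by (intro eq_matI) auto
    show "(I - pa) * (x - pa) = 0\<^sub>m n n" using xC paC IC pax papa by (simp add: ms I_def)
    show "(x - pa) * (x + pb) = 0\<^sub>m n n" using xC paC pbC xx xpb pax papb
      by (simp add: ms, intro eq_matI, auto)
  qed (use IC xC paC pbC in auto)
  ultimately have B: "(I - pa) * M * pb = 0\<^sub>m n n"
    using IC paC MC xC pbC by (simp add: ms)
  have "x * M * (I - pb) = 0\<^sub>m n n"
    unfolding M_def by (rule sandwich[OF xC paC xC _ Dpa x0 xx right]) (use IC pbC in auto)
  moreover have "(x + pa) * M * (I - pb) = 0\<^sub>m n n" unfolding M_def
  proof (rule sandwich[where w = "x - pb" and c = 1, OF _ pbC _ _ Dpb])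
    show "x = x - pb + 1 \<cdot>\<^sub>m pb" using xC pbC by (intro eq_matI) auto
    show "(x + pa) * (x - pb) = 0\<^sub>m n n" using xC paC pbC xx xpb pax papb by (simp add: ms)
    show "(x - pb) * (I - pb) = 0\<^sub>m n n" using xC pbC IC xpb pbpb by (simp add: ms I_def)
  qed (use IC xC paC pbC in auto)
  moreover have "(x + pa) * M * (I - pb) = x * M * (I - pb) + pa * M * (I - pb)"
    using IC paC MC xC pbC by (simp only: ms mult_carrier_mat minus_carrier_mat)
  ultimately have C: "pa * M * (I - pb) = 0\<^sub>m n n"
    using IC paC MC pbC by (simp add: mult_carrier_mat[where nr=n and n=n and nc=n])
  show ?thesis
    using eq_corner_by_blocks[OF MC paC pbC] A B C unfolding M_def I_def .
qed

lemma weak_2_local_derivation_eq_0_by_witness: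
  assumes w2l: "weak_2_local_derivation n \<Delta>"
    and xC: "x \<in> carrier_mat n n" and yC: "y \<in> carrier_mat n n"
    and PC: "P \<in> carrier_mat n n" and QC: "Q \<in> carrier_mat n n"
    and Dy: "\<Delta> y = 0\<^sub>m n n" and \<mu>: "\<mu> \<noteq> 0"
    and Px: "P * x = x" and xQ: "x * Q = x"
    and Py: "P * y = \<mu> \<cdot>\<^sub>m x" and yQ: "y * Q = \<mu> \<cdot>\<^sub>m x"
    and corner: "P * \<Delta> x * Q = \<Delta> x"
  shows "\<Delta> x = 0\<^sub>m n n"
proof -
  define c where "c = 1 / \<mu>"
  have c\<mu>: "c * \<mu> = 1" unfolding c_def using \<mu> by simp
  have "P * \<Delta> x * Q = 0\<^sub>m n n"
  proof (rule weak_2_local_derivation_sandwich_eq_0[OF w2l _ yC PC QC Dy, where w = "x - c \<cdot>\<^sub>m y" and c = c])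
    show "x = x - c \<cdot>\<^sub>m y + c \<cdot>\<^sub>m y" using xC yC by (intro eq_matI) auto
    have "P * (x - c \<cdot>\<^sub>m y) = P * x - c \<cdot>\<^sub>m (P * y)"
      using PC xC yC mult_minus_distrib_mat[of P n n x n "c \<cdot>\<^sub>m y"] mult_smult_distrib[of P n n y n c] by simp
    thus "P * (x - c \<cdot>\<^sub>m y) = 0\<^sub>m n n"
      unfolding Px Py using xC c\<mu> by (auto intro!: eq_matI simp: mult.assoc[symmetric])
    have "(x - c \<cdot>\<^sub>m y) * Q = x * Q - c \<cdot>\<^sub>m (y * Q)"
      using QC xC yC minus_mult_distrib_mat[of x n n "c \<cdot>\<^sub>m y" Q n] mult_smult_assoc_mat[of y n n Q n c] by simp
    thus "(x - c \<cdot>\<^sub>m y) * Q = 0\<^sub>m n n"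
      unfolding xQ yQ using xC c\<mu> by (auto intro!: eq_matI simp: mult.assoc[symmetric])
  qed (use xC yC in auto)
  with corner show ?thesis by simp
qed

subsection \<open>Systems of matrix units\<close>

locale matrix_units =
  fixes n :: nat and p :: "nat \<Rightarrow> complex mat" and e :: "nat \<Rightarrow> nat \<Rightarrow> complex mat"
  assumes minimal: "\<And>k. k \<in> {1..n} \<Longrightarrow> minimal_projection n (p k)"
    and orthogonal: "\<And>k l. k \<in> {1..n} \<Longrightarrow> l \<in> {1..n} \<Longrightarrow> k \<noteq> l \<Longrightarrow> p k * p l = 0\<^sub>m n n"
    and partial_isometry: "\<And>i j. i \<in> {1..n} \<Longrightarrow> j \<in> {1..n} \<Longrightarrow> partial_isometry n (e i j)"
    and source: "\<And>i j. i \<in> {1..n} \<Longrightarrow> j \<in> {1..n} \<Longrightarrow> adj (e i j) * e i j = p j"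
    and range: "\<And>i j. i \<in> {1..n} \<Longrightarrow> j \<in> {1..n} \<Longrightarrow> e i j * adj (e i j) = p i"
begin

lemma p_carrier[simp]: "k \<in> {1..n} \<Longrightarrow> p k \<in> carrier_mat n n"
  and p_idem[simp]: "k \<in> {1..n} \<Longrightarrow> p k * p k = p k"
  using minimal unfolding minimal_projection_def is_projection_def by auto

lemma e_carrier[simp]: "i \<in> {1..n} \<Longrightarrow> j \<in> {1..n} \<Longrightarrow> e i j \<in> carrier_mat n n"
  using partial_isometry unfolding partial_isometry_def by auto

lemma p_mult_e[simp]: "i \<in> {1..n} \<Longrightarrow> j \<in> {1..n} \<Longrightarrow> p i * e i j = e i j"
  using partial_isometry range unfolding partial_isometry_def by auto

lemma e_mult_p[simp]: "i \<in> {1..n} \<Longrightarrow> j \<in> {1..n} \<Longrightarrow> e i j * p j = e i j"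
  using partial_isometry source e_carrier
  unfolding partial_isometry_def by (metis adj_carrier_mat assoc_mult_mat)

lemma p_mult_e_orth:
  "i \<in> {1..n} \<Longrightarrow> j \<in> {1..n} \<Longrightarrow> k \<in> {1..n} \<Longrightarrow> k \<noteq> i \<Longrightarrow> p k * e i j = 0\<^sub>m n n"
  using mult_eq_0_through_orthogonal[of "p k" n "e i j" "p k" "p i"] orthogonal by simp

lemma e_mult_p_orth:
  "i \<in> {1..n} \<Longrightarrow> j \<in> {1..n} \<Longrightarrow> k \<in> {1..n} \<Longrightarrow> j \<noteq> k \<Longrightarrow> e i j * p k = 0\<^sub>m n n"
  using mult_eq_0_through_orthogonal[of "e i j" n "p k" "p j" "p k"] orthogonal by simp

lemma e_mult_e_orth:
  "i \<in> {1..n} \<Longrightarrow> j \<in> {1..n} \<Longrightarrow> k \<in> {1..n} \<Longrightarrow> l \<in> {1..n} \<Longrightarrow> j \<noteq> k \<Longrightarrow>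
    e i j * e k l = 0\<^sub>m n n"
  using mult_eq_0_through_orthogonal[of "e i j" n "e k l" "p j" "p k"] orthogonal by simp

lemma e_mult_e:
  assumes i: "i \<in> {1..n}" and j: "j \<in> {1..n}" and k: "k \<in> {1..n}"
  obtains \<mu> where "\<mu> \<noteq> 0" "e i k * e k j = \<mu> \<cdot>\<^sub>m e i j"
proof -
  note as = assoc_mult_mat[where n\<^sub>1=n and n\<^sub>2=n and n\<^sub>3=n and n\<^sub>4=n]
  define x u v where "x = e i j" and "u = e k j" and "v = e i k"
  have C: "x \<in> carrier_mat n n" "u \<in> carrier_mat n n" "v \<in> carrier_mat n n"
    "adj x \<in> carrier_mat n n" "adj u \<in> carrier_mat n n" "adj v \<in> carrier_mat n n"
    "p i \<in> carrier_mat n n" "p j \<in> carrier_mat n n"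
    unfolding x_def u_def v_def using i j k by auto
  define W where "W = adj x * (v * u)"
  have WC: "W \<in> carrier_mat n n"
    unfolding W_def using C by (simp add: mult_carrier_mat[where nr=n and n=n and nc=n])
  obtain \<mu> where \<mu>: "p j * W * p j = \<mu> \<cdot>\<^sub>m p j"
    using minimal_projection_compression[OF minimal[OF j] WC] by auto
  have "x * (p j * W * p j) = (x * p j) * W * p j"
    using C WC by (simp add: as)
  also have "\<dots> = x * adj x * (v * u) * p j"
    using C i j unfolding W_def x_def by (simp add: as)
  also have "\<dots> = p i * v * (u * p j)"
    using C i j range unfolding x_def by (simp add: as)
  also have "\<dots> = v * u"
    unfolding u_def v_def using i j k by simp
  finally have vu: "v * u = \<mu> \<cdot>\<^sub>m x"
    using \<mu> C mult_smult_distrib[of x n n "p j" n \<mu>] i j unfolding x_def by simp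
  moreover have "\<mu> \<noteq> 0"
  proof
    assume "\<mu> = 0"
    hence vu0: "v * u = 0\<^sub>m n n" using vu C by auto
    have "p j = adj u * (p k * u)" using source[OF k j] k j unfolding u_def by simp
    also have "\<dots> = adj u * ((adj v * v) * u)"
      using source[OF i k] unfolding v_def by simp
    also have "\<dots> = (adj u * adj v) * (v * u)"
      using C by (simp add: as)
    also have "\<dots> = 0\<^sub>m n n"
      using vu0 right_mult_zero_mat[OF mult_carrier_mat[OF C(5,6)]] by simp
    finally show False using minimal[OF j] unfolding minimal_projection_def by simp
  qed
  ultimately show ?thesis using that unfolding x_def u_def v_def by blast
qed

lemma diagonal_unit_vanishes:
  assumes w2l: "weak_2_local_derivation n \<Delta>" and i: "i \<in> {1..n}"
    and Dp: "\<Delta> (p i) = 0\<^sub>m n n"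
  shows "\<Delta> (e i i) = 0\<^sub>m n n"
proof -
  obtain \<mu> where "p i * e i i * p i = \<mu> \<cdot>\<^sub>m p i"
    using minimal_projection_compression[OF minimal[OF i] e_carrier[OF i i]] by blast
  hence "e i i = \<mu> \<cdot>\<^sub>m p i" using i by simp
  thus ?thesis using weak_2_local_derivation_smult_eq_0[OF w2l _ Dp] i by simp
qed

lemma witness_products:
  assumes abc: "a \<in> {1..n}" "b \<in> {1..n}" "c \<in> {1..n}" and distinct: "a \<noteq> b" "a \<noteq> c" "b \<noteq> c"
  shows "(p a + e a c) * p a = p a" "p b * (p b - e c b) = p b"
    "(p a + e a c) * e a b = e a b" "e a b * (p b - e c b) = e a b"
    "(p a + e a c) * (p c + e c b - e a c) = e a c * e c b"
    "(p c + e c b - e a c) * (p b - e c b) = e a c * e c b"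
proof -
  note ms = mat_distribs[of _ n]
  note orth = p_mult_e_orth e_mult_p_orth e_mult_e_orth orthogonal
  have ac_ab: "e a c \<in> carrier_mat n n" "e c b \<in> carrier_mat n n" "e a b \<in> carrier_mat n n"
    using abc by auto
  show "(p a + e a c) * p a = p a" "(p a + e a c) * e a b = e a b"
    using abc distinct orth by (simp_all add: ms)
  show "p b * (p b - e c b) = p b" "e a b * (p b - e c b) = e a b"
    using abc distinct orth by (simp_all add: ms minus_zero_mat)
  have "(p a + e a c) * (p c + e c b - e a c) =
      (p a * p c + e a c * p c) + (p a * e c b + e a c * e c b) - (p a * e a c + e a c * e a c)"
    using abc by (simp add: ms)
  also have "\<dots> = (0\<^sub>m n n + e a c) + (0\<^sub>m n n + e a c * e c b) - (e a c + 0\<^sub>m n n)"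
    using abc distinct orth by simp
  finally show "(p a + e a c) * (p c + e c b - e a c) = e a c * e c b"
    using ac_ab mult_carrier_mat[OF ac_ab(1,2)] by (auto intro!: eq_matI)
  have "(p c + e c b - e a c) * (p b - e c b) =
      p c * p b + e c b * p b - e a c * p b - (p c * e c b + e c b * e c b - e a c * e c b)"
    using abc by (simp add: ms)
  also have "\<dots> = 0\<^sub>m n n + e c b - 0\<^sub>m n n - (e c b + 0\<^sub>m n n - e a c * e c b)"
    using abc distinct orth by simp
  finally show "(p c + e c b - e a c) * (p b - e c b) = e a c * e c b"
    using ac_ab mult_carrier_mat[OF ac_ab(1,2)] by (auto intro!: eq_matI)
qed

lemma off_diagonal_unit_vanishes:
  assumes w2l: "weak_2_local_derivation n \<Delta>"
    and abc: "a \<in> {1..n}" "b \<in> {1..n}" "c \<in> {1..n}" and distinct: "a \<noteq> b" "a \<noteq> c" "b \<noteq> c"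
    and Dpa: "\<Delta> (p a) = 0\<^sub>m n n" and Dpb: "\<Delta> (p b) = 0\<^sub>m n n"
    and Dy: "\<Delta> (p c + e c b - e a c) = 0\<^sub>m n n"
  shows "\<Delta> (e a b) = 0\<^sub>m n n"
proof -
  obtain \<mu> where \<mu>: "\<mu> \<noteq> 0" and vu: "e a c * e c b = \<mu> \<cdot>\<^sub>m e a b"
    using e_mult_e[OF abc(1,2,3)] by blast
  define M P Q where "M = \<Delta> (e a b)" and "P = p a + e a c" and "Q = p b - e c b"
  have MC: "M \<in> carrier_mat n n"
    using w2l abc unfolding M_def weak_2_local_derivation_def by simp
  have PC: "P \<in> carrier_mat n n" and QC: "Q \<in> carrier_mat n n"
    unfolding P_def Q_def using abc by auto
  have corner: "M = p a * M * p b"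
    unfolding M_def using abc distinct orthogonal Dpa Dpb
    by (intro weak_2_local_derivation_corner[OF w2l]) auto
  have "P * M * Q = (P * p a) * M * (p b * Q)"
    by (subst corner) (use PC QC abc MC in \<open>simp add: assoc_mult_mat[where n\<^sub>1=n and n\<^sub>2=n and n\<^sub>3=n and n\<^sub>4=n]
        mult_carrier_mat[where nr=n and n=n and nc=n]\<close>)
  also have "\<dots> = M"
    using witness_products[OF abc distinct] corner[symmetric] unfolding P_def Q_def by simp
  finally have PMQ: "P * M * Q = M" .
  show ?thesis
    using weak_2_local_derivation_eq_0_by_witness[OF w2l _ _ PC QC Dy \<mu>] PMQ abc
      witness_products[OF abc distinct] vu
    unfolding M_def P_def Q_def by simp
qed

end

theorem lemma2p8:
  fixes n :: nat and \<Delta> :: "complex mat \<Rightarrow> complex mat"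
    and p :: "nat \<Rightarrow> complex mat" and e :: "nat \<Rightarrow> nat \<Rightarrow> complex mat"
    and i0 j0 :: nat
  assumes w2l: "weak_2_local_derivation n \<Delta>"
    and minp: "\<And>k. k \<in> {1..n} \<Longrightarrow> minimal_projection n (p k)"
    and orth: "\<And>k l. k \<in> {1..n} \<Longrightarrow> l \<in> {1..n} \<Longrightarrow> k \<noteq> l \<Longrightarrow> p k * p l = 0\<^sub>m n n"
    and e_pi: "\<And>i j. i \<in> {1..n} \<Longrightarrow> j \<in> {1..n} \<Longrightarrow> partial_isometry n (e i j)"
    and e_src: "\<And>i j. i \<in> {1..n} \<Longrightarrow> j \<in> {1..n} \<Longrightarrow> adj (e i j) * e i j = p j"
    and e_rng: "\<And>i j. i \<in> {1..n} \<Longrightarrow> j \<in> {1..n} \<Longrightarrow> e i j * adj (e i j) = p i"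
    and Dp: "\<And>k. k \<in> {1..n} \<Longrightarrow> \<Delta> (p k) = 0\<^sub>m n n"
    and i0: "2 \<le> i0" "i0 \<le> n" and j0: "2 \<le> j0" "j0 \<le> n"
    and H: "\<Delta> (p 1 + e 1 j0 - e i0 1) = 0\<^sub>m n n"
  shows "\<Delta> (e i0 j0) = 0\<^sub>m n n"
proof -
  interpret matrix_units n p e
    using minp orth e_pi e_src e_rng by unfold_locales
  have indices: "i0 \<in> {1..n}" "j0 \<in> {1..n}" "1 \<in> {1..n}" "i0 \<noteq> 1" "j0 \<noteq> 1"
    using i0 j0 by auto
  show ?thesis
  proof (cases "i0 = j0")
    case True
    then show ?thesis using diagonal_unit_vanishes[OF w2l] indices Dp by simp
  next
    case False
    then show ?thesis
      using off_diagonal_unit_vanishes[OF w2l indices(1-3) False indices(4,5)] Dp H indices by simp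
  qed
qed

end
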